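(* For every message $M$ and formula $\phi$: $\vdash\neg\langle M\rangle\phi\leftrightarrow\neg[M]\phi$.
   Context: Fix a finite set $\mathcal{A}$ of agent names containing a distinguished name $\mathsf{CM}$. Messages: $M ::= a \mid B \mid (M,M)$ ($a\in\mathcal{A}$, $B$ optional data constants, pairs). $\mathcal{P}$ is a denumerable set of propositional variables containing atoms $\mathsf{k}_a(M)$ ("$a$ knows $M$"). Formulas: $\phi ::= P \mid \phi\wedge\phi \mid \phi\vee\phi \mid \neg\phi \mid \phi\to\phi \mid [M]\phi$. Abbreviations: $\mathrm{true}:=\mathsf{k}_{\mathsf{CM}}(\mathsf{CM})$, $\mathrm{false}:=\neg\mathrm{true}$, $\phi\leftrightarrow\psi:=(\phi\to\psi)\wedge(\psi\to\phi)$, $\langle M\rangle\phi:=\neg\neg(\mathsf{k}_{\mathsf{CM}}(M)\wedge\phi)$. LIiP is the smallest set of formulas containing all instances of: the axioms of an adequate Hilbert axiomatization of intuitionistic propositional logic; $\mathsf{k}_a(a)$; $(\mathsf{k}_a(M)\wedge\mathsf{k}_a(M'))\leftrightarrow\mathsf{k}_a((M,M'))$; $[M]\mathsf{k}_{\mathsf{CM}}(M)$; $[M](\phi\to\psi)\to([M]\phi\to[M]\psi)$; $[M]\phi\to(\mathsf{k}_{\mathsf{CM}}(M)\to\phi)$; $[M]\phi\to\langle M\rangle\phi$; $\phi\to[M]\phi$; and closed under modus ponens and the rule: if $\mathsf{k}_{\mathsf{CM}}(M)\to\mathsf{k}_{\mathsf{CM}}(M')$ is in the set then so is $[M']\phi\to[M]\phi$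 for every $\phi$. Write $\vdash\phi$ for $\phi\in\mathrm{LIiP}$. *)

theory Defs
  imports Main
begin

text \<open>Agent names: a finite type 'a (class finite); the distinguished name CM is
  a parameter cm.  Data constants: an arbitrary type 'b.\<close>

datatype ('a, 'b) msg = Agent 'a | Dat 'b | MPair "('a, 'b) msg" "('a, 'b) msg"

text \<open>Denumerable set of propositional variables containing the atoms k_a(M).\<close>
datatype ('a, 'b) pvar = Kn 'a "('a, 'b) msg" | PVar nat

datatype ('a, 'b) fm =
    Atom "('a, 'b) pvar"
  | And "('a, 'b) fm" "('a, 'b) fm"
  | Or "('a, 'b) fm" "('a, 'b) fm"
  | Neg "('a, 'b) fm"
  | Imp "('a, 'b) fm" "('a, 'b) fm"
  | Box "('a, 'b) msg" "('a, 'b) fm"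

definition kn :: "'a \<Rightarrow> ('a, 'b) msg \<Rightarrow> ('a, 'b) fm" where
  "kn a M = Atom (Kn a M)"

definition TT :: "'a \<Rightarrow> ('a, 'b) fm" where
  "TT cm = kn cm (Agent cm)"

definition FF :: "'a \<Rightarrow> ('a, 'b) fm" where
  "FF cm = Neg (TT cm)"

definition Iff :: "('a, 'b) fm \<Rightarrow> ('a, 'b) fm \<Rightarrow> ('a, 'b) fm" where
  "Iff p q = And (Imp p q) (Imp q p)"

definition Dia :: "'a \<Rightarrow> ('a, 'b) msg \<Rightarrow> ('a, 'b) fm \<Rightarrow> ('a, 'b) fm" where
  "Dia cm M p = Neg (Neg (And (kn cm M) p))"

text \<open>LIiP, relative to the distinguished agent cm.  The intuitionistic
  propositional part uses the standard Hilbert axiomatization (Kleene) with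
  primitive negation.\<close>
inductive_set LIiP :: "'a::finite \<Rightarrow> ('a, 'b) fm set" for cm :: 'a where
  ip1: "Imp p (Imp q p) \<in> LIiP cm"
| ip2: "Imp (Imp p (Imp q r)) (Imp (Imp p q) (Imp p r)) \<in> LIiP cm"
| ip3: "Imp (And p q) p \<in> LIiP cm"
| ip4: "Imp (And p q) q \<in> LIiP cm"
| ip5: "Imp p (Imp q (And p q)) \<in> LIiP cm"
| ip6: "Imp p (Or p q) \<in> LIiP cm"
| ip7: "Imp q (Or p q) \<in> LIiP cm"
| ip8: "Imp (Imp p r) (Imp (Imp q r) (Imp (Or p q) r)) \<in> LIiP cm"
| ip9: "Imp (Imp p q) (Imp (Imp p (Neg q)) (Neg p)) \<in> LIiP cm"
| ip10: "Imp (Neg p) (Imp p q) \<in> LIiP cm"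
| kself: "kn a (Agent a) \<in> LIiP cm"
| kpair: "Iff (And (kn a M) (kn a M')) (kn a (MPair M M')) \<in> LIiP cm"
| boxk: "Box M (kn cm M) \<in> LIiP cm"
| boxK: "Imp (Box M (Imp p q)) (Imp (Box M p) (Box M q)) \<in> LIiP cm"
| boxT: "Imp (Box M p) (Imp (kn cm M) p) \<in> LIiP cm"
| boxD: "Imp (Box M p) (Dia cm M p) \<in> LIiP cm"
| boxI: "Imp p (Box M p) \<in> LIiP cm"
| mp: "\<lbrakk>Imp p q \<in> LIiP cm; p \<in> LIiP cm\<rbrakk> \<Longrightarrow> q \<in> LIiP cm"
| mono: "Imp (kn cm M) (kn cm M') \<in> LIiP cm \<Longrightarrow> Imp (Box M' p) (Box M p) \<in> LIiP cm"

end

theory Submission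
  imports Defs
begin

text \<open>One direction is the contrapositive of axiom D, [M]\<phi> \<rightarrow> \<langle>M\<rangle>\<phi>.
  For the other, axiom \<phi> \<rightarrow> [M]\<phi> gives k(M) \<and> \<phi> \<rightarrow> [M]\<phi>, hence
  \<not>[M]\<phi> \<rightarrow> \<not>(k(M) \<and> \<phi>), and \<not>\<psi> \<rightarrow> \<not>\<not>\<not>\<psi> is an instance of double negation
  introduction.\<close>

lemma LIiP_imp_weaken: "q \<in> LIiP cm \<Longrightarrow> Imp p q \<in> LIiP cm"
  by (rule LIiP.mp[OF LIiP.ip1])

lemma LIiP_imp_mp: "Imp p (Imp q r) \<in> LIiP cm \<Longrightarrow> Imp p q \<in> LIiP cm \<Longrightarrow> Imp p r \<in> LIiP cm"
  by (rule LIiP.mp[OF LIiP.mp[OF LIiP.ip2]])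

lemma LIiP_imp_refl: "Imp p p \<in> LIiP cm"
  by (rule LIiP_imp_mp[OF LIiP.ip1 LIiP.ip1])

lemma LIiP_imp_trans: "Imp p q \<in> LIiP cm \<Longrightarrow> Imp q r \<in> LIiP cm \<Longrightarrow> Imp p r \<in> LIiP cm"
  by (rule LIiP_imp_mp[OF LIiP_imp_weaken])

lemma LIiP_contrapos: "Imp p q \<in> LIiP cm \<Longrightarrow> Imp (Neg q) (Neg p) \<in> LIiP cm"
  by (rule LIiP_imp_trans[OF LIiP.ip1 LIiP.mp[OF LIiP.ip9]])

lemma LIiP_double_neg_intro: "Imp p (Neg (Neg p)) \<in> LIiP cm"
proof -
  have "Imp p (Imp (Imp (Neg p) p) (Imp (Imp (Neg p) (Neg p)) (Neg (Neg p)))) \<in> LIiP cm"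
    by (rule LIiP_imp_weaken[OF LIiP.ip9])
  then have "Imp p (Imp (Imp (Neg p) (Neg p)) (Neg (Neg p))) \<in> LIiP cm"
    by (rule LIiP_imp_mp[OF _ LIiP.ip1])
  then show ?thesis
    by (rule LIiP_imp_mp[OF _ LIiP_imp_weaken[OF LIiP_imp_refl]])
qed

lemma LIiP_iffI: "Imp p q \<in> LIiP cm \<Longrightarrow> Imp q p \<in> LIiP cm \<Longrightarrow> Iff p q \<in> LIiP cm"
  unfolding Iff_def by (rule LIiP.mp[OF LIiP.mp[OF LIiP.ip5]])

theorem theorem2p14:
  fixes cm :: "'a::finite" and M :: "('a, 'b) msg" and \<phi> :: "('a, 'b) fm"
  shows "Iff (Neg (Dia cm M \<phi>)) (Neg (Box M \<phi>)) \<in> LIiP cm"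
proof (rule LIiP_iffI)
  show "Imp (Neg (Dia cm M \<phi>)) (Neg (Box M \<phi>)) \<in> LIiP cm"
    by (rule LIiP_contrapos[OF LIiP.boxD])
  have "Imp (And (kn cm M) \<phi>) (Box M \<phi>) \<in> LIiP cm"
    by (rule LIiP_imp_trans[OF LIiP.ip4 LIiP.boxI])
  then have "Imp (Neg (Box M \<phi>)) (Neg (And (kn cm M) \<phi>)) \<in> LIiP cm"
    by (rule LIiP_contrapos)
  then show "Imp (Neg (Box M \<phi>)) (Neg (Dia cm M \<phi>)) \<in> LIiP cm"
    unfolding Dia_def by (rule LIiP_imp_trans[OF _ LIiP_double_neg_intro])
qed

end
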